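(* Let $(X,\Sigma)$ be a measurable space, $(\mathcal{E}_t)_{t\ge0}$ a process of pavings, $\mathscr{A}=\{\mathsf{A}_t(\cdot|E)\colon E\in\mathcal{E}_t,\,t\ge0\}$ a parametric family of conditional aggregation operators, $f\in\mathbf{F}$ and $\boldsymbol{\mu}=(\mu_t)_{t\ge0}$ a family of monotone measures on $\Sigma$. Then: (a) for fixed $t\ge0$, $\boldsymbol{\mu}_{\mathscr{A}}(f,t)=0$ if and only if $\mu_t(E)=0$ for every $E\in\mathcal{E}_t^0$ such that $\mathsf{A}_t(f|E)\ge t$; (b) if $\mathsf{A}_t(\lambda\mathbf{1}_X|E)\le\lambda$ for every $E\in\mathcal{E}_t^0$ and all $t,\lambda\ge0$, then there exists $b>0$ such that $\boldsymbol{\mu}_{\mathscr{A}}(f,t)=0$ for each $t>b$.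
   Context: $\Sigma^0=\Sigma\setminus\{\emptyset\}$. $\mathbf{F}$ denotes the set of all $\Sigma$-measurable, nonnegative, bounded functions $f\colon X\to[0,\infty)$. A monotone measure is a map $\mu\colon\Sigma\to[0,\infty]$ with $\mu(B)\le\mu(C)$ whenever $B\subseteq C$, $\mu(\emptyset)=0$ and $\mu(X)>0$. For $E\in\Sigma^0$, a conditional aggregation operator (CAO) w.r.t. $E$ is a map $\mathsf{A}(\cdot|E)\colon\mathbf{F}\to[0,\infty]$ such that (C1) $\mathsf{A}(f|E)\le\mathsf{A}(g|E)$ whenever $f(x)\le g(x)$ for all $x\in E$, and (C2) $\mathsf{A}(\mathbf{1}_{X\setminus E}|E)=0$. A process of pavings is a family $(\mathcal{E}_t)_{t\ge0}$ with $\emptyset\in\mathcal{E}_t\subseteq\Sigma$ for all $t$; $\mathcal{E}_t^0=\mathcal{E}_t\setminus\{\emptyset\}$. A parametric family of CAOs (pFCA) $\{\mathsf{A}_t(\cdot|E)\colon E\in\mathcal{E}_t,\,t\ge0\}$ consists of CAOs $\mathsf{A}_t(\cdot|E)$ w.r.t. $E$ for each $t$ and $E\in\mathcal{E}_t^0$, with the convention $\mathsf{A}_t(\cdot|\emptyset)=\infty$. The generalized level measure is $\boldsymbol{\mu}_{\mathscr{A}}(f,t)=\sup\{\mu_t(E)\colon \mathsf{A}_t(f|E)\ge t,\ E\in\mathcal{E}_t\}$ for $t\ge0$. *)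

theory Defs
  imports "HOL-Analysis.Analysis"
begin

text \<open>The class F: measurable, nonnegative, bounded functions on X = space M.
  Functions are taken extensional (zero outside X), so that they represent maps X \<rightarrow> [0,\<infinity>).\<close>
definition F_class :: "'a measure \<Rightarrow> ('a \<Rightarrow> real) set" where
  "F_class M = {f. f \<in> borel_measurable M \<and> (\<forall>x\<in>space M. 0 \<le> f x)
                  \<and> bounded (f ` space M) \<and> (\<forall>x. x \<notin> space M \<longrightarrow> f x = 0)}"

definition monotone_measure :: "'a measure \<Rightarrow> ('a set \<Rightarrow> ennreal) \<Rightarrow> bool" where
  "monotone_measure M \<mu> \<longleftrightarrow>
     (\<forall>B\<in>sets M. \<forall>C\<in>sets M. B \<subseteq> C \<longrightarrow> \<mu> B \<le> \<mu> C) \<and> \<mu> {} = 0 \<and> \<mu> (space M) > 0"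

definition is_CAO :: "'a measure \<Rightarrow> 'a set \<Rightarrow> (('a \<Rightarrow> real) \<Rightarrow> ennreal) \<Rightarrow> bool" where
  "is_CAO M E A \<longleftrightarrow>
     (\<forall>f\<in>F_class M. \<forall>g\<in>F_class M. (\<forall>x\<in>E. f x \<le> g x) \<longrightarrow> A f \<le> A g) \<and>
     A (indicator (space M - E)) = 0"

definition process_of_pavings :: "'a measure \<Rightarrow> (real \<Rightarrow> 'a set set) \<Rightarrow> bool" where
  "process_of_pavings M \<E> \<longleftrightarrow> (\<forall>t\<ge>0. {} \<in> \<E> t \<and> \<E> t \<subseteq> sets M)"

text \<open>Parametric family of CAOs; A t E f stands for A_t(f|E).\<close>
definition is_pFCA :: "'a measure \<Rightarrow> (real \<Rightarrow> 'a set set)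
      \<Rightarrow> (real \<Rightarrow> 'a set \<Rightarrow> ('a \<Rightarrow> real) \<Rightarrow> ennreal) \<Rightarrow> bool" where
  "is_pFCA M \<E> A \<longleftrightarrow> (\<forall>t\<ge>0. \<forall>E\<in>\<E> t - {{}}. is_CAO M E (A t E))"

definition pFCA_val :: "(real \<Rightarrow> 'a set \<Rightarrow> ('a \<Rightarrow> real) \<Rightarrow> ennreal)
      \<Rightarrow> real \<Rightarrow> 'a set \<Rightarrow> ('a \<Rightarrow> real) \<Rightarrow> ennreal" where
  "pFCA_val A t E f = (if E = {} then \<infinity> else A t E f)"

definition gen_level_measure :: "(real \<Rightarrow> 'a set \<Rightarrow> ennreal) \<Rightarrow> (real \<Rightarrow> 'a set set)
      \<Rightarrow> (real \<Rightarrow> 'a set \<Rightarrow> ('a \<Rightarrow> real) \<Rightarrow> ennreal) \<Rightarrow> ('a \<Rightarrow> real) \<Rightarrow> real \<Rightarrow> ennreal" where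
  "gen_level_measure \<mu> \<E> A f t =
     Sup {\<mu> t E | E. E \<in> \<E> t \<and> ennreal t \<le> pFCA_val A t E f}"

end

theory Submission
  imports Defs
begin

text \<open>Part (a) only uses that the level measure is a supremum of values of \<open>\<mu> t\<close>, where the
  empty set contributes \<open>\<mu> t {} = 0\<close>. For part (b), a bound \<open>f \<le> K\<close> on \<open>X\<close> and monotonicity of
  each CAO give \<open>A_t(f|E) \<le> A_t(K 1_X|E) \<le> K\<close>, so for \<open>t > K\<close> no nonempty \<open>E\<close> reaches level \<open>t\<close>.\<close>

lemma gen_level_measure_eq_0_iff:
  assumes "\<mu> t {} = 0"
  shows "gen_level_measure \<mu> \<E> A f t = 0 \<longleftrightarrow>
           (\<forall>E\<in>\<E> t - {{}}. ennreal t \<le> A t E f \<longrightarrow> \<mu> t E = 0)"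
proof -
  have "Sup S = 0 \<longleftrightarrow> (\<forall>x\<in>S. x = 0)" for S :: "ennreal set"
    using Sup_bot_conv(1)[of S] by (simp add: bot_ennreal)
  with assms show ?thesis
    unfolding gen_level_measure_def pFCA_val_def by auto
qed

lemma F_class_bounded_above:
  assumes "f \<in> F_class M"
  obtains K where "K \<ge> 0" "\<forall>x\<in>space M. f x \<le> K"
proof -
  obtain K where K: "\<forall>x\<in>space M. \<bar>f x\<bar> \<le> K"
    using assms unfolding F_class_def bounded_iff real_norm_def by auto
  show thesis
  proof (rule that)
    show "\<forall>x\<in>space M. f x \<le> max K 0"
      using K by (meson abs_ge_self max.coboundedI1 order.trans)
  qed simp
qed

lemma const_indicator_in_F_class:
  assumes "c \<ge> 0"
  shows "(\<lambda>x. c * indicator (space M) x) \<in> F_class M"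
  unfolding F_class_def
proof (intro CollectI conjI ballI allI impI)
  show "bounded ((\<lambda>x. c * indicator (space M) x) ` space M)"
    by (rule bounded_subset[of "{c}"]) auto
qed (use assms in auto)

lemma CAO_le_const:
  assumes "is_CAO M E B" "E \<subseteq> space M" "f \<in> F_class M" "c \<ge> 0"
    and "\<forall>x\<in>space M. f x \<le> c"
    and "B (\<lambda>x. c * indicator (space M) x) \<le> ennreal c"
  shows "B f \<le> ennreal c"
proof -
  have "B f \<le> B (\<lambda>x. c * indicator (space M) x)"
    using assms(1-5) const_indicator_in_F_class[OF assms(4), of M]
    unfolding is_CAO_def by (auto simp: subset_iff)
  also have "\<dots> \<le> ennreal c"
    by (fact assms(6))
  finally show ?thesis .
qed

theorem proposition3p7:
  fixes M :: "'a measure"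
    and \<E> :: "real \<Rightarrow> 'a set set"
    and A :: "real \<Rightarrow> 'a set \<Rightarrow> ('a \<Rightarrow> real) \<Rightarrow> ennreal"
    and f :: "'a \<Rightarrow> real"
    and \<mu> :: "real \<Rightarrow> 'a set \<Rightarrow> ennreal"
  assumes "process_of_pavings M \<E>"
    and "is_pFCA M \<E> A"
    and "f \<in> F_class M"
    and "\<forall>t\<ge>0. monotone_measure M (\<mu> t)"
  shows "(\<forall>t\<ge>0. gen_level_measure \<mu> \<E> A f t = 0 \<longleftrightarrow>
              (\<forall>E\<in>\<E> t - {{}}. ennreal t \<le> A t E f \<longrightarrow> \<mu> t E = 0))
       \<and> ((\<forall>t\<ge>0. \<forall>l\<ge>0. \<forall>E\<in>\<E> t - {{}}.
              A t E (\<lambda>x. l * indicator (space M) x) \<le> ennreal l)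
          \<longrightarrow> (\<exists>b>0. \<forall>t>b. gen_level_measure \<mu> \<E> A f t = 0))"
proof (intro conjI impI allI)
  have empty: "\<mu> t {} = 0" if "t \<ge> 0" for t
    using assms(4) that unfolding monotone_measure_def by blast
  then show "t \<ge> 0 \<Longrightarrow> gen_level_measure \<mu> \<E> A f t = 0 \<longleftrightarrow>
              (\<forall>E\<in>\<E> t - {{}}. ennreal t \<le> A t E f \<longrightarrow> \<mu> t E = 0)" for t
    by (rule gen_level_measure_eq_0_iff)
  assume normalized: "\<forall>t\<ge>0. \<forall>l\<ge>0. \<forall>E\<in>\<E> t - {{}}.
              A t E (\<lambda>x. l * indicator (space M) x) \<le> ennreal l"
  obtain K where K: "K \<ge> 0" "\<forall>x\<in>space M. f x \<le> K"
    using F_class_bounded_above[OF assms(3)] .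
  have "gen_level_measure \<mu> \<E> A f t = 0" if "t > K + 1" for t
  proof -
    have t: "t \<ge> 0" "ennreal K < ennreal t"
      using \<open>t > K + 1\<close> K by (simp_all add: ennreal_less_iff)
    have "A t E f \<le> ennreal K" if E: "E \<in> \<E> t - {{}}" for E
    proof (rule CAO_le_const[OF _ _ assms(3) K])
      show "is_CAO M E (A t E)"
        using assms(2) t E unfolding is_pFCA_def by blast
      show "E \<subseteq> space M"
        using assms(1) t E sets.sets_into_space unfolding process_of_pavings_def by blast
      show "A t E (\<lambda>x. K * indicator (space M) x) \<le> ennreal K"
        using normalized t K E by blast
    qed
    then have "\<forall>E\<in>\<E> t - {{}}. \<not> ennreal t \<le> A t E f"
      using t(2) by (meson leD order.trans)
    then show ?thesis
      using gen_level_measure_eq_0_iff[of \<mu> t, OF empty[OF t(1)]] by blast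
  qed
  then show "\<exists>b>0. \<forall>t>b. gen_level_measure \<mu> \<E> A f t = 0"
    using K by (intro exI[of _ "K + 1"]) auto
qed

end
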